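(* Let $p$ be a prime and let $A$ be the $p\times p$ matrix over $\mathbb{F}_p$ with rows and columns indexed by $0,1,\dots,p-1$ defined by $A(s,s)=0$ for all $s$, $A(s,0)=1$ for $s=1,\dots,p-1$, and $A(s,t)=(s-t)^{-1}$ for $s\in\{0,\dots,p-1\}$, $t\in\{1,\dots,p-1\}$, $s\neq t$. Then every $2\times 2$ submatrix of $A$ is invertible. *)

theory Defs
  imports "HOL-Analysis.Analysis"
begin

text \<open>The field F_p is modelled by an arbitrary finite field type 'a of prime
  cardinality p (unique up to isomorphism).\<close>

definition matA :: "nat \<Rightarrow> nat \<Rightarrow> 'a::field" where
  "matA s t =
     (if s = t then 0
      else if t = 0 then 1
      else inverse (of_nat s - of_nat t))"

definition sub2 :: "nat \<Rightarrow> nat \<Rightarrow> nat \<Rightarrow> nat \<Rightarrow> 'a::field ^ 2 ^ 2" where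
  "sub2 s1 s2 t1 t2 =
     (\<chi> i j. matA (if i = 1 then s1 else s2) (if j = 1 then t1 else t2))"

end

theory Submission
  imports Defs "HOL-Number_Theory.Residues"
begin

text \<open>For a minor with no zero entry outside column
  \<open>0\<close>, clearing denominators leaves \<open>(a\<^sub>1 - a\<^sub>2)(b\<^sub>1 - b\<^sub>2) \<noteq> 0\<close>; a zero entry
  kills one diagonal product but not the other, and a minor meeting column \<open>0\<close>
  reduces to a single inverse or to a difference of two distinct inverses. This
  works over any field once the indices \<open>0, \<dots>, p - 1\<close> are distinct field
  elements, which holds because \<open>F\<^sub>p\<close> has characteristic \<open>p\<close>.\<close>

definition cauchy_entry :: "'a::field \<Rightarrow> 'a \<Rightarrow> 'a" where
  "cauchy_entry x y = (if x = y then 0 else if y = 0 then 1 else inverse (x - y))"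

text \<open>Since \<open>inverse 0 = 0\<close>, outside the column \<open>y = 0\<close> the diagonal needs no
  special case.\<close>
lemma cauchy_entry_eq_inverse: "y \<noteq> 0 \<Longrightarrow> cauchy_entry x y = inverse (x - y)"
  by (simp add: cauchy_entry_def)

lemma cauchy_entry_column_zero: "cauchy_entry x 0 = (if x = 0 then 0 else 1)"
  by (simp add: cauchy_entry_def)

lemma cauchy_entry_minor_column_zero:
  fixes a1 a2 b :: "'a::field"
  assumes "a1 \<noteq> a2" "b \<noteq> 0"
  shows "cauchy_entry a1 0 * cauchy_entry a2 b - cauchy_entry a1 b * cauchy_entry a2 0 \<noteq> 0"
  using assms
  by (cases "a1 = 0"; cases "a2 = 0") (simp_all add: cauchy_entry_column_zero cauchy_entry_eq_inverse)

lemma inverse_products_differ: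
  fixes a1 a2 b1 b2 :: "'a::field"
  assumes "a1 \<noteq> a2" "b1 \<noteq> b2"
  shows "inverse (a1 - b1) * inverse (a2 - b2) \<noteq> inverse (a1 - b2) * inverse (a2 - b1)"
proof
  assume eq: "inverse (a1 - b1) * inverse (a2 - b2) = inverse (a1 - b2) * inverse (a2 - b1)"
  show False
  proof (cases "a1 = b1 \<or> a2 = b2 \<or> a1 = b2 \<or> a2 = b1")
    case True
    then show False using eq assms by (elim disjE) (simp_all add: right_minus_eq)
  next
    case False
    with eq have "(a1 - b2) * (a2 - b1) = (a1 - b1) * (a2 - b2)"
      by (simp add: field_simps)
    then have "(a1 - a2) * (b1 - b2) = 0" by (simp add: algebra_simps)
    with assms show False by simp
  qed
qed

lemma cauchy_entry_minor_nonzero: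
  fixes a1 a2 b1 b2 :: "'a::field"
  assumes "a1 \<noteq> a2" "b1 \<noteq> b2"
  shows "cauchy_entry a1 b1 * cauchy_entry a2 b2 - cauchy_entry a1 b2 * cauchy_entry a2 b1 \<noteq> 0"
proof -
  consider "b1 = 0" | "b2 = 0" | "b1 \<noteq> 0" "b2 \<noteq> 0" by blast
  then show ?thesis
  proof cases
    case 1
    with assms cauchy_entry_minor_column_zero[of a1 a2 b2] show ?thesis by simp
  next
    case 2
    with assms cauchy_entry_minor_column_zero[of a1 a2 b1] show ?thesis
      by (metis mult.commute right_minus_eq)
  next
    case 3
    with inverse_products_differ[OF assms] show ?thesis
      by (simp add: cauchy_entry_eq_inverse)
  qed
qed

lemma CHAR_eq_CARD_if_prime:
  assumes "prime CARD('a::{field,finite})"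
  shows "CHAR('a) = CARD('a)"
proof -
  have "CHAR('a) dvd CARD('a)" by (rule CHAR_dvd_CARD)
  moreover have "CHAR('a) \<noteq> 1" by simp
  ultimately show ?thesis using assms by (auto simp: prime_nat_iff)
qed

lemma of_nat_eq_iff_below_prime_CARD:
  assumes "prime CARD('a::{field,finite})" "s < CARD('a)" "t < CARD('a)"
  shows "(of_nat s :: 'a) = of_nat t \<longleftrightarrow> s = t"
  using assms by (simp add: of_nat_eq_iff_cong_CHAR CHAR_eq_CARD_if_prime cong_def)

lemma matA_eq_cauchy_entry:
  assumes "prime CARD('a::{field,finite})" "s < CARD('a)" "t < CARD('a)"
  shows "(matA s t :: 'a) = cauchy_entry (of_nat s) (of_nat t)"
  using of_nat_eq_iff_below_prime_CARD[OF assms]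
    of_nat_eq_iff_below_prime_CARD[OF assms(1,3), of 0] assms(1)
  by (simp add: matA_def cauchy_entry_def prime_gt_0_nat)

lemma det_sub2: "det (sub2 s1 s2 t1 t2) = matA s1 t1 * matA s2 t2 - matA s1 t2 * matA s2 t1"
  by (simp add: det_2 sub2_def)

theorem lemma2p7:
  fixes s1 s2 t1 t2 :: nat
  assumes "prime CARD('a::{field,finite})"
    and "s1 < s2" and "s2 < CARD('a)"
    and "t1 < t2" and "t2 < CARD('a)"
  shows "invertible (sub2 s1 s2 t1 t2 :: 'a ^ 2 ^ 2)"
proof -
  have rows: "(of_nat s1 :: 'a) \<noteq> of_nat s2"
    using assms by (simp add: of_nat_eq_iff_below_prime_CARD)
  have cols: "(of_nat t1 :: 'a) \<noteq> of_nat t2"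
    using assms by (simp add: of_nat_eq_iff_below_prime_CARD)
  have "det (sub2 s1 s2 t1 t2 :: 'a ^ 2 ^ 2) \<noteq> 0"
    using cauchy_entry_minor_nonzero[OF rows cols] assms
    by (simp add: det_sub2 matA_eq_cauchy_entry)
  then show ?thesis by (simp add: invertible_det_nz)
qed

end
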